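(* Let $C$ be a finite set of $m$ candidates, $N=\{1,\dots,n\}$ voters with weak orders over $C$, $k\le m$ a positive integer, $\mathbf w\in\mathbb N^m$ non-increasing and $\boldsymbol\alpha\in\mathbb R^k$ with $\alpha_1\ge\dots\ge\alpha_k\ge0$. Set $w_{m+1}=0$, $w'_r=w_r-w_{r+1}$. Consider the integer program (OWA-IP) with variables $x_{i,\ell,r}$ ($i\in N,\ell\in[k],r\in[m]$) and $y_c$ ($c\in C$): maximise $\sum_{i\in N}\sum_{\ell\in[k]}\sum_{r\in[m]}\alpha_\ell w'_r x_{i,\ell,r}$ subject to $\sum_{c\in C}y_c=k$; $\sum_{\ell\in[k]}x_{i,\ell,r}\le\sum_{c:\ \mathrm{rank}_i(c)\le r}y_c$ for all $i\in N,r\in[m]$; $x_{i,\ell,r}\in\{0,1\}$; $y_c\in\{0,1\}$. Then the optimal value of (OWA-IP) equals $\max_{W\subseteq C,|W|=k}\sum_{i\in N}\boldsymbol\alpha\big((w_{\mathrm{rank}_i(c)})_{c\in W}\big)$, and for every optimal solution $W=\{c:y_c=1\}$ is an optimal committee for the OWA-based rule defined by $\boldsymbol\alpha$ and $\mathbf w$.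
   Context: Ranks: a weak order partitions $C$ into indifference classes $A_1\succ\dots\succ A_r$; a candidate in $A_t$ has rank $t$ (rank 1 = most preferred). For $\mathbf x\in\mathbb R^k$, $\boldsymbol\alpha(\mathbf x)=\sum_j\alpha_jx_{\sigma(j)}$ where $x_{\sigma(1)}\ge\dots\ge x_{\sigma(k)}$. The OWA-based rule selects a size-$k$ committee maximising $\sum_i\boldsymbol\alpha((w_{\mathrm{rank}_i(c)})_{c\in W})$. *)

theory Defs
  imports Complex_Main "HOL-Library.Multiset"
begin

text \<open>A weak order over C: a complete (total) preorder on C.
  (c, d) \<in> R means c is weakly preferred to d.\<close>
definition weak_order :: "'c set \<Rightarrow> ('c \<times> 'c) set \<Rightarrow> bool" where
  "weak_order C R \<longleftrightarrow> R \<subseteq> C \<times> C \<and> refl_on C R \<and> trans R \<and> total_on C R"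

text \<open>Rank of c: index t of the indifference class A_t containing c
  (rank 1 = most preferred). It equals the number of distinct upper
  contour sets of candidates weakly preferred to c, i.e. the number of
  indifference classes A_1, ..., A_t weakly above c.\<close>
definition rank :: "'c set \<Rightarrow> ('c \<times> 'c) set \<Rightarrow> 'c \<Rightarrow> nat" where
  "rank C R c = card ((\<lambda>d. {e \<in> C. (e, d) \<in> R}) ` {d \<in> C. (d, c) \<in> R})"

definition owa :: "(nat \<Rightarrow> real) \<Rightarrow> 'c set \<Rightarrow> ('c \<Rightarrow> real) \<Rightarrow> real" where
  "owa \<alpha> W f = (let xs = rev (sorted_list_of_multiset (image_mset f (mset_set W)))
                 in \<Sum>j<card W. \<alpha> (Suc j) * xs ! j)"

definition owa_score ::
  "'c set \<Rightarrow> nat \<Rightarrow> (nat \<Rightarrow> ('c \<times> 'c) set) \<Rightarrow> (nat \<Rightarrow> nat) \<Rightarrow> (nat \<Rightarrow> real) \<Rightarrow> 'c set \<Rightarrow> real" where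
  "owa_score C n P w \<alpha> W = (\<Sum>i\<in>{1..n}. owa \<alpha> W (\<lambda>c. real (w (rank C (P i) c))))"

definition optimal_committee ::
  "'c set \<Rightarrow> nat \<Rightarrow> (nat \<Rightarrow> ('c \<times> 'c) set) \<Rightarrow> (nat \<Rightarrow> nat) \<Rightarrow> (nat \<Rightarrow> real) \<Rightarrow> nat \<Rightarrow> 'c set \<Rightarrow> bool" where
  "optimal_committee C n P w \<alpha> k W \<longleftrightarrow> W \<subseteq> C \<and> card W = k \<and>
     (\<forall>W'. W' \<subseteq> C \<and> card W' = k \<longrightarrow> owa_score C n P w \<alpha> W' \<le> owa_score C n P w \<alpha> W)"

text \<open>w extended by w_{m+1} = 0, and w'_r = w_r - w_{r+1}.\<close>
definition wdiff :: "nat \<Rightarrow> (nat \<Rightarrow> nat) \<Rightarrow> nat \<Rightarrow> real" where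
  "wdiff m w r = real (w r) - (if r + 1 \<le> m then real (w (r + 1)) else 0)"

definition owa_ip_feasible ::
  "'c set \<Rightarrow> nat \<Rightarrow> (nat \<Rightarrow> ('c \<times> 'c) set) \<Rightarrow> nat \<Rightarrow>
   (nat \<Rightarrow> nat \<Rightarrow> nat \<Rightarrow> real) \<Rightarrow> ('c \<Rightarrow> real) \<Rightarrow> bool" where
  "owa_ip_feasible C n P k x y \<longleftrightarrow>
     (\<Sum>c\<in>C. y c) = real k \<and>
     (\<forall>i\<in>{1..n}. \<forall>r\<in>{1..card C}.
        (\<Sum>l\<in>{1..k}. x i l r) \<le> (\<Sum>c\<in>{c \<in> C. rank C (P i) c \<le> r}. y c)) \<and>
     (\<forall>i\<in>{1..n}. \<forall>l\<in>{1..k}. \<forall>r\<in>{1..card C}. x i l r \<in> {0, 1}) \<and>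
     (\<forall>c\<in>C. y c \<in> {0, 1})"

definition owa_ip_objective ::
  "'c set \<Rightarrow> nat \<Rightarrow> (nat \<Rightarrow> nat) \<Rightarrow> (nat \<Rightarrow> real) \<Rightarrow> nat \<Rightarrow>
   (nat \<Rightarrow> nat \<Rightarrow> nat \<Rightarrow> real) \<Rightarrow> real" where
  "owa_ip_objective C n w \<alpha> k x =
     (\<Sum>i\<in>{1..n}. \<Sum>l\<in>{1..k}. \<Sum>r\<in>{1..card C}. \<alpha> l * wdiff (card C) w r * x i l r)"

definition owa_ip_optimal ::
  "'c set \<Rightarrow> nat \<Rightarrow> (nat \<Rightarrow> ('c \<times> 'c) set) \<Rightarrow> (nat \<Rightarrow> nat) \<Rightarrow> (nat \<Rightarrow> real) \<Rightarrow> nat \<Rightarrow>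
   (nat \<Rightarrow> nat \<Rightarrow> nat \<Rightarrow> real) \<Rightarrow> ('c \<Rightarrow> real) \<Rightarrow> bool" where
  "owa_ip_optimal C n P w \<alpha> k x y \<longleftrightarrow> owa_ip_feasible C n P k x y \<and>
     (\<forall>x' y'. owa_ip_feasible C n P k x' y' \<longrightarrow>
        owa_ip_objective C n w \<alpha> k x' \<le> owa_ip_objective C n w \<alpha> k x)"

end

theory Submission imports Defs begin

text \<open>Write each score \<open>w_t\<close> as the tail sum of the non-negative differences \<open>w'_r\<close>, \<open>r \<ge> t\<close>.
  Then the OWA value of a committee \<open>W\<close> for voter \<open>i\<close> becomes \<open>\<Sum>_r w'_r (\<alpha>_1 + \<dots> + \<alpha>_N)\<close>,
  where \<open>N\<close> is the number of members of \<open>W\<close> of rank at most \<open>r\<close> (capped at \<open>k\<close>).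
  Because \<open>\<alpha>\<close> is non-increasing and non-negative, in block \<open>(i, r)\<close> a feasible IP solution whose
  \<open>y\<close> selects \<open>W\<close> earns at most \<open>\<alpha>_1 + \<dots> + \<alpha>_N\<close>, and switching on \<open>x_{i,1,r}, \<dots>, x_{i,N,r}\<close> earns
  exactly that.\<close>

lemma antitone_on_interval:
  fixes f :: "nat \<Rightarrow> 'a::order"
  assumes adjacent: "\<And>r. a \<le> r \<Longrightarrow> r < b \<Longrightarrow> f (Suc r) \<le> f r"
    and "a \<le> i" "i \<le> j" "j \<le> b"
  shows "f j \<le> f i"
  using assms(3,4)
proof (induction j rule: dec_induct)
  case (step n)
  have "f (Suc n) \<le> f n" using step.hyps step.prems assms(2) by (intro adjacent) auto
  then show ?case using step by (auto intro: order_trans)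
qed simp

lemma wdiff_nonneg:
  assumes "\<And>r. 1 \<le> r \<Longrightarrow> r < m \<Longrightarrow> w (Suc r) \<le> w r" "1 \<le> r"
  shows "0 \<le> wdiff m w r"
  using assms by (auto simp: wdiff_def)

lemma sum_wdiff_from:
  assumes "1 \<le> t" "t \<le> m"
  shows "(\<Sum>r\<in>{t..m}. wdiff m w r) = real (w t)"
proof -
  define h where "h r = (if r \<le> m then real (w r) else 0)" for r
  have "(\<Sum>r\<in>{t..m}. wdiff m w r) = (\<Sum>r\<in>{t..m}. - (h (Suc r) - h r))"
    by (rule sum.cong) (auto simp: wdiff_def h_def)
  also have "\<dots> = - (\<Sum>r\<in>{t..m}. h (Suc r) - h r)"
    by (rule sum_negf)
  also have "\<dots> = real (w t)"
    using assms by (subst sum_Suc_diff) (auto simp: h_def)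
  finally show ?thesis .
qed

lemma sum_zero_one_eq_card:
  assumes "finite A" "\<forall>a\<in>A. y a \<in> {0, 1::real}"
  shows "(\<Sum>a\<in>A. y a) = real (card {a\<in>A. y a = 1})"
proof -
  have "(\<Sum>a\<in>A. y a) = (\<Sum>a\<in>A. if y a = 1 then 1 else 0)"
    using assms by (intro sum.cong) auto
  then show ?thesis
    using sum.inter_filter[OF assms(1), of "\<lambda>_. 1::real" "\<lambda>a. y a = 1"] by simp
qed

lemma sum_antitone_le_initial:
  fixes \<alpha> :: "nat \<Rightarrow> real"
  assumes anti: "\<And>l. 1 \<le> l \<Longrightarrow> l < k \<Longrightarrow> \<alpha> (Suc l) \<le> \<alpha> l"
  shows "k' \<le> k \<Longrightarrow> S \<subseteq> {1..k'} \<Longrightarrow> sum \<alpha> S \<le> sum \<alpha> {1..card S}"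
proof (induction k' arbitrary: S)
  case (Suc k')
  show ?case
  proof (cases "Suc k' \<in> S")
    case False
    then have "S \<subseteq> {1..k'}" using Suc.prems by (force simp: le_Suc_eq)
    then show ?thesis using Suc by simp
  next
    case True
    define S' where "S' = S - {Suc k'}"
    have fin: "finite S" using Suc.prems finite_subset by blast
    have card_S: "card S = Suc (card S')" unfolding S'_def by (rule card.remove[OF fin True])
    have "card S \<le> Suc k'" using card_mono[OF _ Suc.prems(2)] by simp
    then have "\<alpha> (Suc k') \<le> \<alpha> (card S)"
      using antitone_on_interval[of 1 k \<alpha>, OF anti] card_S Suc.prems(1) by simp
    moreover have "sum \<alpha> S' \<le> sum \<alpha> {1..card S'}"
      using Suc by (intro Suc.IH) (auto simp: S'_def le_Suc_eq)
    moreover have "sum \<alpha> S = \<alpha> (Suc k') + sum \<alpha> S'"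
      using True fin by (simp add: S'_def sum.remove)
    ultimately show ?thesis by (simp add: card_S)
  qed
qed simp

lemma sum_zero_one_weighted_le_prefix:
  fixes \<alpha> x :: "nat \<Rightarrow> real"
  assumes anti: "\<And>l. 1 \<le> l \<Longrightarrow> l < k \<Longrightarrow> \<alpha> (Suc l) \<le> \<alpha> l" and "0 \<le> \<alpha> k"
    and x01: "\<forall>l\<in>{1..k}. x l \<in> {0, 1}" and "(\<Sum>l\<in>{1..k}. x l) \<le> real N"
  shows "(\<Sum>l\<in>{1..k}. \<alpha> l * x l) \<le> sum \<alpha> {1..min k N}"
proof -
  define S where "S = {l\<in>{1..k}. x l = 1}"
  have nonneg: "0 \<le> \<alpha> l" if "1 \<le> l" "l \<le> k" for l
    using antitone_on_interval[of 1 k \<alpha>, OF anti that order_refl] \<open>0 \<le> \<alpha> k\<close> by simp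
  have "(\<Sum>l\<in>{1..k}. \<alpha> l * x l) = (\<Sum>l\<in>{1..k}. if x l = 1 then \<alpha> l else 0)"
    using x01 by (intro sum.cong) auto
  also have "\<dots> = sum \<alpha> S"
    using sum.inter_filter[of "{1..k}" \<alpha> "\<lambda>l. x l = 1"] by (simp add: S_def)
  also have "\<dots> \<le> sum \<alpha> {1..card S}"
    by (rule sum_antitone_le_initial[where \<alpha>=\<alpha> and k=k, OF anti order_refl]) (auto simp: S_def)
  also have "\<dots> \<le> sum \<alpha> {1..min k N}"
  proof (rule sum_mono2)
    have "card S \<le> N" using sum_zero_one_eq_card[of "{1..k}" x] x01 assms(4) by (simp add: S_def)
    moreover have "S \<subseteq> {1..k}" by (auto simp: S_def)
    then have "card S \<le> k" using card_mono[of "{1..k}" S] by simp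
    ultimately show "{1..card S} \<subseteq> {1..min k N}" by auto
  qed (auto intro: nonneg)
  finally show ?thesis .
qed

lemma sorted_nth_le_iff_length_filter:
  "sorted (rs::nat list) \<Longrightarrow> j < length rs \<Longrightarrow> rs ! j \<le> r \<longleftrightarrow> j < length (filter (\<lambda>x. x \<le> r) rs)"
proof (induction rs arbitrary: j)
  case (Cons a rs)
  show ?case
  proof (cases "a \<le> r")
    case True
    then show ?thesis using Cons by (cases j) auto
  next
    case False
    then have "filter (\<lambda>x. x \<le> r) rs = []" using Cons.prems by (auto simp: filter_empty_conv)
    moreover have "\<not> (a # rs) ! j \<le> r" using Cons.prems False
      by (cases j) (auto, meson Cons.prems(1) nth_mem order_trans sorted_simps(2))
    ultimately show ?thesis using False by simp
  qed
qed simp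

lemma length_sorted_list_of_image_mset_set:
  "length (sorted_list_of_multiset (image_mset g (mset_set W))) = card W"
  by (metis mset_sorted_list_of_multiset size_mset size_image_mset size_mset_set)

lemma length_filter_sorted_list_of_image_mset_set:
  assumes "finite W"
  shows "length (filter P (sorted_list_of_multiset (image_mset g (mset_set W)))) = card {c\<in>W. P (g c)}"
proof -
  have "length (filter P (sorted_list_of_multiset (image_mset g (mset_set W))))
      = size (filter_mset P (image_mset g (mset_set W)))"
    by (metis mset_filter size_mset mset_sorted_list_of_multiset)
  then show ?thesis using assms by (simp add: filter_mset_image_mset)
qed

text \<open>Sorting the ranks increasingly sorts the scores \<open>w\<close> decreasingly, as \<open>owa\<close> requires.\<close>

lemma owa_antitone_comp:
  fixes w :: "nat \<Rightarrow> nat" and g :: "'c \<Rightarrow> nat"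
  assumes anti: "\<And>r. 1 \<le> r \<Longrightarrow> r < m \<Longrightarrow> w (Suc r) \<le> w r"
    and "finite W" and range: "\<forall>c\<in>W. 1 \<le> g c \<and> g c \<le> m"
  defines "rs \<equiv> sorted_list_of_multiset (image_mset g (mset_set W))"
  shows "owa \<alpha> W (\<lambda>c. real (w (g c))) = (\<Sum>j<card W. \<alpha> (Suc j) * real (w (rs ! j)))"
proof -
  define L where "L = map (\<lambda>r. real (w r)) rs"
  have rs_range: "1 \<le> rs ! j \<and> rs ! j \<le> m" if "j < length rs" for j
    using range nth_mem[OF that] \<open>finite W\<close> by (auto simp: rs_def)
  have "sorted (rev L)"
    unfolding sorted_rev_iff_nth_mono
  proof (intro allI impI)
    fix i j assume ij: "i \<le> j" "j < length L"
    then have "rs ! i \<le> rs ! j" by (simp add: L_def rs_def sorted_nth_mono)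
    then show "L ! j \<le> L ! i"
      using antitone_on_interval[of 1 m w, OF anti, of "rs ! i" "rs ! j"] rs_range ij
      by (simp add: L_def)
  qed
  moreover have "image_mset (\<lambda>c. real (w (g c))) (mset_set W) = mset (rev L)"
    by (simp add: L_def rs_def image_mset.compositionality comp_def)
  ultimately have "rev (sorted_list_of_multiset (image_mset (\<lambda>c. real (w (g c))) (mset_set W))) = L"
    by (simp only: sorted_list_of_multiset_mset sorted_sort_id rev_rev_ident)
  then show ?thesis
    using length_sorted_list_of_image_mset_set[of g W]
    by (auto simp: owa_def L_def rs_def intro!: sum.cong)
qed

lemma owa_threshold_decomposition:
  fixes w :: "nat \<Rightarrow> nat" and g :: "'c \<Rightarrow> nat"
  assumes anti: "\<And>r. 1 \<le> r \<Longrightarrow> r < m \<Longrightarrow> w (Suc r) \<le> w r"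
    and fin: "finite W" and range: "\<forall>c\<in>W. 1 \<le> g c \<and> g c \<le> m"
  shows "owa \<alpha> W (\<lambda>c. real (w (g c))) =
    (\<Sum>r\<in>{1..m}. wdiff m w r * sum \<alpha> {1..min (card W) (card {c\<in>W. g c \<le> r})})"
proof -
  define rs where "rs = sorted_list_of_multiset (image_mset g (mset_set W))"
  have len: "length rs = card W"
    unfolding rs_def by (rule length_sorted_list_of_image_mset_set)
  have rs_range: "1 \<le> rs ! j \<and> rs ! j \<le> m" if "j < length rs" for j
    using range nth_mem[OF that] fin by (auto simp: rs_def)
  have count: "length (filter (\<lambda>x. x \<le> r) rs) = card {c\<in>W. g c \<le> r}" for r
    unfolding rs_def using fin by (rule length_filter_sorted_list_of_image_mset_set)
  have "owa \<alpha> W (\<lambda>c. real (w (g c))) = (\<Sum>j<card W. \<alpha> (Suc j) * real (w (rs ! j)))"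
    unfolding rs_def by (rule owa_antitone_comp[where w=w, OF anti fin range])
  also have "\<dots> = (\<Sum>j<card W. \<Sum>r\<in>{1..m}. wdiff m w r * (if rs ! j \<le> r then \<alpha> (Suc j) else 0))"
  proof (rule sum.cong)
    fix j assume "j \<in> {..<card W}"
    then have j: "1 \<le> rs ! j" "rs ! j \<le> m" using rs_range len by auto
    have "{r\<in>{1..m}. rs ! j \<le> r} = {rs ! j..m}" using j by auto
    then have "\<alpha> (Suc j) * real (w (rs ! j)) = \<alpha> (Suc j) * (\<Sum>r\<in>{r\<in>{1..m}. rs ! j \<le> r}. wdiff m w r)"
      using sum_wdiff_from[OF j] by simp
    also have "\<dots> = (\<Sum>r\<in>{1..m}. wdiff m w r * (if rs ! j \<le> r then \<alpha> (Suc j) else 0))"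
      unfolding sum.inter_filter[OF finite_atLeastAtMost] sum_distrib_left by (rule sum.cong) auto
    finally show "\<alpha> (Suc j) * real (w (rs ! j)) = \<dots>" .
  qed simp
  also have "\<dots> = (\<Sum>r\<in>{1..m}. wdiff m w r * (\<Sum>j<card W. if rs ! j \<le> r then \<alpha> (Suc j) else 0))"
    by (subst sum.swap) (simp add: sum_distrib_left)
  also have "\<dots> = (\<Sum>r\<in>{1..m}. wdiff m w r * sum \<alpha> {1..min (card W) (card {c\<in>W. g c \<le> r})})"
  proof (rule sum.cong)
    fix r
    have "(\<Sum>j<card W. if rs ! j \<le> r then \<alpha> (Suc j) else 0)
        = (\<Sum>j\<in>{j\<in>{..<card W}. j < card {c\<in>W. g c \<le> r}}. \<alpha> (Suc j))"
      unfolding sum.inter_filter[OF finite_lessThan]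
      using sorted_nth_le_iff_length_filter[of rs] len count by (intro sum.cong) (auto simp: rs_def)
    also have "{j\<in>{..<card W}. j < card {c\<in>W. g c \<le> r}} = {..<min (card W) (card {c\<in>W. g c \<le> r})}"
      by auto
    finally show "wdiff m w r * (\<Sum>j<card W. if rs ! j \<le> r then \<alpha> (Suc j) else 0)
        = wdiff m w r * sum \<alpha> {1..min (card W) (card {c\<in>W. g c \<le> r})}"
      by (simp add: sum.atLeast1_atMost_eq)
  qed simp
  finally show ?thesis .
qed

lemma rank_bounds:
  assumes "finite C" "weak_order C R" "c \<in> C"
  shows "1 \<le> rank C R c \<and> rank C R c \<le> card C"
proof -
  let ?D = "{d \<in> C. (d, c) \<in> R}"
  have "c \<in> ?D" using assms unfolding weak_order_def refl_on_def by auto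
  then have "1 \<le> card ((\<lambda>d. {e \<in> C. (e, d) \<in> R}) ` ?D)"
    using assms(1) by (auto simp: Suc_le_eq card_gt_0_iff)
  moreover have "card ((\<lambda>d. {e \<in> C. (e, d) \<in> R}) ` ?D) \<le> card ?D"
    using assms(1) by (intro card_image_le) simp
  moreover have "card ?D \<le> card C"
    using assms(1) by (intro card_mono) auto
  ultimately show ?thesis unfolding rank_def by simp
qed

lemma owa_score_threshold_form:
  assumes "finite C" "\<forall>i\<in>{1..n}. weak_order C (P i)"
    and anti: "\<And>r. 1 \<le> r \<Longrightarrow> r < card C \<Longrightarrow> w (Suc r) \<le> w r"
    and "W \<subseteq> C" "card W = k"
  shows "owa_score C n P w \<alpha> W = (\<Sum>i\<in>{1..n}. \<Sum>r\<in>{1..card C}.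
           wdiff (card C) w r * sum \<alpha> {1..min k (card {c\<in>W. rank C (P i) c \<le> r})})"
  unfolding owa_score_def
proof (rule sum.cong)
  fix i assume "i \<in> {1..n}"
  then have "weak_order C (P i)" using assms(2) by blast
  then have "\<forall>c\<in>W. 1 \<le> rank C (P i) c \<and> rank C (P i) c \<le> card C"
    using rank_bounds[OF assms(1)] assms(4) by blast
  then show "owa \<alpha> W (\<lambda>c. real (w (rank C (P i) c))) = (\<Sum>r\<in>{1..card C}.
      wdiff (card C) w r * sum \<alpha> {1..min k (card {c\<in>W. rank C (P i) c \<le> r})})"
    using owa_threshold_decomposition[where w=w, OF anti finite_subset[OF assms(4,1)]] assms(5)
    by simp
qed simp

lemma owa_ip_objective_regroup:
  "owa_ip_objective C n w \<alpha> k x =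
    (\<Sum>i\<in>{1..n}. \<Sum>r\<in>{1..card C}. wdiff (card C) w r * (\<Sum>l\<in>{1..k}. \<alpha> l * x i l r))"
  unfolding owa_ip_objective_def sum_distrib_left
  by (rule sum.cong[OF refl], subst sum.swap) (simp add: mult_ac)

definition committee_ip_x :: "'c set \<Rightarrow> (nat \<Rightarrow> ('c \<times> 'c) set) \<Rightarrow> 'c set \<Rightarrow> nat \<Rightarrow> nat \<Rightarrow> nat \<Rightarrow> real"
  where "committee_ip_x C P W i l r = (if l \<le> card {c\<in>W. rank C (P i) c \<le> r} then 1 else 0)"

definition committee_ip_y :: "'c set \<Rightarrow> 'c \<Rightarrow> real"
  where "committee_ip_y W c = (if c \<in> W then 1 else 0)"

lemma sum_committee_ip_y:
  assumes "finite A"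
  shows "(\<Sum>c\<in>A. committee_ip_y W c) = real (card (A \<inter> W))"
  using assms by (simp add: committee_ip_y_def sum.If_cases)

lemma committee_ip_solution:
  assumes "finite C" "\<forall>i\<in>{1..n}. weak_order C (P i)"
    and anti: "\<And>r. 1 \<le> r \<Longrightarrow> r < card C \<Longrightarrow> w (Suc r) \<le> w r"
    and W: "W \<subseteq> C" "card W = k"
  shows "owa_ip_feasible C n P k (committee_ip_x C P W) (committee_ip_y W)"
    and "owa_ip_objective C n w \<alpha> k (committee_ip_x C P W) = owa_score C n P w \<alpha> W"
proof -
  define N where "N i r = card {c\<in>W. rank C (P i) c \<le> r}" for i r
  have x_block: "{l\<in>{1..k}. committee_ip_x C P W i l r = 1} = {1..min k (N i r)}" for i r
    by (auto simp: committee_ip_x_def N_def)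
  have "(\<Sum>l\<in>{1..k}. committee_ip_x C P W i l r) \<le> real (N i r)" for i r
  proof -
    have "(\<Sum>l\<in>{1..k}. committee_ip_x C P W i l r) = real (card {l\<in>{1..k}. committee_ip_x C P W i l r = 1})"
      by (rule sum_zero_one_eq_card) (auto simp: committee_ip_x_def)
    then show ?thesis unfolding x_block by simp
  qed
  moreover have "(\<Sum>c\<in>{c \<in> C. rank C (P i) c \<le> r}. committee_ip_y W c) = real (N i r)" for i r
  proof -
    have "{c \<in> C. rank C (P i) c \<le> r} \<inter> W = {c\<in>W. rank C (P i) c \<le> r}" using W by auto
    then show ?thesis using sum_committee_ip_y[of "{c \<in> C. rank C (P i) c \<le> r}" W] assms(1)
      by (simp add: N_def)
  qed
  moreover have "(\<Sum>c\<in>C. committee_ip_y W c) = real k"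
    using sum_committee_ip_y[OF assms(1)] W by (simp add: Int_absorb1)
  ultimately show "owa_ip_feasible C n P k (committee_ip_x C P W) (committee_ip_y W)"
    by (simp add: owa_ip_feasible_def committee_ip_x_def committee_ip_y_def)
  have "(\<Sum>l\<in>{1..k}. \<alpha> l * committee_ip_x C P W i l r) = sum \<alpha> {1..min k (N i r)}" for i r
  proof -
    have "(\<Sum>l\<in>{1..k}. \<alpha> l * committee_ip_x C P W i l r)
        = sum \<alpha> {l\<in>{1..k}. committee_ip_x C P W i l r = 1}"
      unfolding sum.inter_filter[OF finite_atLeastAtMost] by (rule sum.cong) (auto simp: committee_ip_x_def)
    then show ?thesis by (simp only: x_block)
  qed
  then show "owa_ip_objective C n w \<alpha> k (committee_ip_x C P W) = owa_score C n P w \<alpha> W"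
    by (simp add: owa_ip_objective_regroup owa_score_threshold_form[where w=w, OF assms] N_def)
qed

lemma owa_ip_feasible_committee:
  assumes "finite C" "\<forall>i\<in>{1..n}. weak_order C (P i)"
    and w_anti: "\<And>r. 1 \<le> r \<Longrightarrow> r < card C \<Longrightarrow> w (Suc r) \<le> w r"
    and \<alpha>_anti: "\<And>l. 1 \<le> l \<Longrightarrow> l < k \<Longrightarrow> \<alpha> (Suc l) \<le> \<alpha> l" and "0 \<le> \<alpha> k"
    and feas: "owa_ip_feasible C n P k x y"
  shows "card {c\<in>C. y c = 1} = k"
    and "owa_ip_objective C n w \<alpha> k x \<le> owa_score C n P w \<alpha> {c\<in>C. y c = 1}"
proof -
  let ?W = "{c\<in>C. y c = 1}"
  have y01: "\<forall>c\<in>A. y c \<in> {0, 1}" if "A \<subseteq> C" for A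
    using feas that by (auto simp: owa_ip_feasible_def)
  show card_W: "card ?W = k"
    using feas sum_zero_one_eq_card[OF assms(1) y01] by (simp add: owa_ip_feasible_def)
  have "(\<Sum>l\<in>{1..k}. \<alpha> l * x i l r) \<le> sum \<alpha> {1..min k (card {c\<in>?W. rank C (P i) c \<le> r})}"
    if "i \<in> {1..n}" "r \<in> {1..card C}" for i r
  proof (rule sum_zero_one_weighted_le_prefix[where \<alpha>=\<alpha>, OF \<alpha>_anti \<open>0 \<le> \<alpha> k\<close>])
    show "\<forall>l\<in>{1..k}. x i l r \<in> {0, 1}" using feas that by (simp add: owa_ip_feasible_def)
    have "(\<Sum>l\<in>{1..k}. x i l r) \<le> (\<Sum>c\<in>{c \<in> C. rank C (P i) c \<le> r}. y c)"
      using feas that by (simp add: owa_ip_feasible_def)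
    also have "\<dots> = real (card {c\<in>{c \<in> C. rank C (P i) c \<le> r}. y c = 1})"
      using y01 assms(1) by (intro sum_zero_one_eq_card) auto
    also have "{c\<in>{c \<in> C. rank C (P i) c \<le> r}. y c = 1} = {c\<in>?W. rank C (P i) c \<le> r}"
      by auto
    finally show "(\<Sum>l\<in>{1..k}. x i l r) \<le> real (card {c\<in>?W. rank C (P i) c \<le> r})" .
  qed
  then have "owa_ip_objective C n w \<alpha> k x \<le> (\<Sum>i\<in>{1..n}. \<Sum>r\<in>{1..card C}.
      wdiff (card C) w r * sum \<alpha> {1..min k (card {c\<in>?W. rank C (P i) c \<le> r})})"
    unfolding owa_ip_objective_regroup
    by (intro sum_mono mult_left_mono) (auto intro: wdiff_nonneg w_anti)
  then show "owa_ip_objective C n w \<alpha> k x \<le> owa_score C n P w \<alpha> ?W"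
    using owa_score_threshold_form[where w=w, OF assms(1-3) _ card_W] by simp
qed

lemma relaxation_optimum_eq_Max:
  fixes S :: "'w \<Rightarrow> real" and obj :: "'x \<Rightarrow> real"
  assumes "finite Ws" "Ws \<noteq> {}"
    and embed: "\<And>W. W \<in> Ws \<Longrightarrow> feas (ex W) (ey W) \<and> obj (ex W) = S W"
    and project: "\<And>x y. feas x y \<Longrightarrow> pr y \<in> Ws \<and> obj x \<le> S (pr y)"
  defines "opt x y \<equiv> feas x y \<and> (\<forall>x' y'. feas x' y' \<longrightarrow> obj x' \<le> obj x)"
  shows "\<exists>x y. opt x y"
    and "opt x y \<Longrightarrow> obj x = Max (S ` Ws) \<and> pr y \<in> Ws \<and> S (pr y) = Max (S ` Ws)"
proof -
  have "Max (S ` Ws) \<in> S ` Ws" using assms(1,2) by simp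
  then obtain W0 where W0: "W0 \<in> Ws" "S W0 = Max (S ` Ws)" by (metis imageE)
  have le_Max: "S W \<le> Max (S ` Ws)" if "W \<in> Ws" for W
    using assms(1) that by simp
  have obj_le_Max: "obj x \<le> Max (S ` Ws)" if "feas x y" for x y
    using project[OF that] le_Max[of "pr y"] by linarith
  show "\<exists>x y. opt x y"
    using embed[OF W0(1)] W0(2) obj_le_Max unfolding opt_def by auto
  assume "opt x y"
  then have "feas x y" and "obj (ex W0) \<le> obj x"
    using embed[OF W0(1)] unfolding opt_def by auto
  then have "Max (S ` Ws) \<le> obj x" and "pr y \<in> Ws" and "obj x \<le> S (pr y)"
    using embed[OF W0(1)] W0(2) project by auto
  then show "obj x = Max (S ` Ws) \<and> pr y \<in> Ws \<and> S (pr y) = Max (S ` Ws)"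
    using le_Max[of "pr y"] by auto
qed

theorem mainTheorem6:
  fixes C :: "'c set" and n m k :: nat and P :: "nat \<Rightarrow> ('c \<times> 'c) set"
    and w :: "nat \<Rightarrow> nat" and \<alpha> :: "nat \<Rightarrow> real"
  assumes "finite C" and "card C = m"
    and "\<forall>i\<in>{1..n}. weak_order C (P i)"
    and "0 < k" and "k \<le> m"
    and "\<forall>r. 1 \<le> r \<and> r < m \<longrightarrow> w (r + 1) \<le> w r"
    and "\<forall>l. 1 \<le> l \<and> l < k \<longrightarrow> \<alpha> (l + 1) \<le> \<alpha> l"
    and "0 \<le> \<alpha> k"
  shows "(\<exists>x y. owa_ip_optimal C n P w \<alpha> k x y) \<and>
    (\<forall>x y. owa_ip_optimal C n P w \<alpha> k x y \<longrightarrow>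
       owa_ip_objective C n w \<alpha> k x =
         Max ((owa_score C n P w \<alpha>) ` {W. W \<subseteq> C \<and> card W = k}) \<and>
       optimal_committee C n P w \<alpha> k {c \<in> C. y c = 1})"
proof -
  let ?Ws = "{W. W \<subseteq> C \<and> card W = k}"
  let ?S = "owa_score C n P w \<alpha>" and ?Y = "\<lambda>y. {c\<in>C. y c = 1}"
  have w_anti: "\<And>r. 1 \<le> r \<Longrightarrow> r < card C \<Longrightarrow> w (Suc r) \<le> w r"
    and \<alpha>_anti: "\<And>l. 1 \<le> l \<Longrightarrow> l < k \<Longrightarrow> \<alpha> (Suc l) \<le> \<alpha> l"
    using assms(2,6,7) by auto
  have fin: "finite ?Ws" using assms(1) by (auto intro: finite_subset[of _ "Pow C"])
  have ne: "?Ws \<noteq> {}" using obtain_subset_with_card_n[of k C] assms(2,5) by auto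
  have embed: "owa_ip_feasible C n P k (committee_ip_x C P W) (committee_ip_y W) \<and>
      owa_ip_objective C n w \<alpha> k (committee_ip_x C P W) = ?S W" if "W \<in> ?Ws" for W
    using that committee_ip_solution[where w=w, OF assms(1,3) w_anti] by simp
  have project: "?Y y \<in> ?Ws \<and> owa_ip_objective C n w \<alpha> k x \<le> ?S (?Y y)"
    if "owa_ip_feasible C n P k x y" for x y
    using owa_ip_feasible_committee[where w=w and \<alpha>=\<alpha>, OF assms(1,3) w_anti \<alpha>_anti assms(8) that]
    by simp
  note relaxation = relaxation_optimum_eq_Max[where feas = "owa_ip_feasible C n P k"
      and obj = "owa_ip_objective C n w \<alpha> k" and S = ?S and pr = ?Y and Ws = ?Ws]
  show ?thesis
  proof (intro conjI allI impI)
    show "\<exists>x y. owa_ip_optimal C n P w \<alpha> k x y"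
      unfolding owa_ip_optimal_def by (rule relaxation(1)) (fact fin ne embed project)+
    fix x y assume opt: "owa_ip_optimal C n P w \<alpha> k x y"
    have "owa_ip_objective C n w \<alpha> k x = Max (?S ` ?Ws) \<and> ?Y y \<in> ?Ws \<and> ?S (?Y y) = Max (?S ` ?Ws)"
      by (rule relaxation(2)) (fact fin ne embed project opt[unfolded owa_ip_optimal_def])+
    then show "owa_ip_objective C n w \<alpha> k x = Max (?S ` ?Ws)"
      and "optimal_committee C n P w \<alpha> k (?Y y)"
      using Max_ge[OF finite_imageI[OF fin]] unfolding optimal_committee_def by auto
  qed
qed

end
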